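(* Let ${\boldsymbol\pi}$ be a permuton and let $\{\sigma_n\}_{n\in\mathbb N}$ be a sequence of permutations with $|\sigma_n|\to\infty$ whose associated permutons ${\boldsymbol\pi}_{\sigma_n}$ converge weakly to ${\boldsymbol\pi}$. Assume that ${\boldsymbol\pi}(A)=0$ for every monotone set $A\subset[0,1]^2$. Then $\operatorname{LIS}(\sigma_n)/|\sigma_n|\to0$.
   Context: A permuton is a Borel probability measure on $[0,1]^2$ with both marginals equal to Lebesgue measure on $[0,1]$. For a permutation $\sigma$ of size $n$, ${\boldsymbol\pi}_\sigma$ is $n$ times Lebesgue measure on $\bigcup_{j=1}^n[\frac{j-1}{n},\frac jn]\times[\frac{\sigma(j)-1}{n},\frac{\sigma(j)}{n}]$. A set $A\subset[0,1]^2$ is monotone if $A\subset([0,t]\times[0,s])\cup([t,1]\times[s,1])$ for every $(t,s)\in A$. $\operatorname{LIS}(\sigma)$ is the maximal cardinality of a set of indices on which $\sigma$ is increasing. *)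

theory Defs
  imports "HOL-Probability.Probability" "HOL-Combinatorics.Permutations"
begin

definition unit_lebesgue :: "real measure" where
  "unit_lebesgue = density lborel (indicator {0..1})"

text \<open>A permuton: a Borel probability measure on the plane (hence concentrated on
  [0,1]^2, by the marginal conditions) whose two marginals are Lebesgue measure on [0,1].\<close>
definition permuton :: "(real \<times> real) measure \<Rightarrow> bool" where
  "permuton \<mu> \<longleftrightarrow> prob_space \<mu> \<and> sets \<mu> = sets borel \<and>
     distr \<mu> lborel fst = unit_lebesgue \<and> distr \<mu> lborel snd = unit_lebesgue"

definition perm_squares :: "nat \<Rightarrow> (nat \<Rightarrow> nat) \<Rightarrow> (real \<times> real) set" where
  "perm_squares n \<sigma> = (\<Union>j\<in>{1..n}.
      {(real j - 1) / real n .. real j / real n} \<times>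
      {(real (\<sigma> j) - 1) / real n .. real (\<sigma> j) / real n})"

definition permuton_of :: "nat \<Rightarrow> (nat \<Rightarrow> nat) \<Rightarrow> (real \<times> real) measure" where
  "permuton_of n \<sigma> = density lborel (\<lambda>p. ennreal (real n) * indicator (perm_squares n \<sigma>) p)"

definition weak_conv_plane ::
    "(nat \<Rightarrow> (real \<times> real) measure) \<Rightarrow> (real \<times> real) measure \<Rightarrow> bool" where
  "weak_conv_plane M \<mu> \<longleftrightarrow>
     (\<forall>f :: real \<times> real \<Rightarrow> real. continuous_on UNIV f \<and> bounded (range f) \<longrightarrow>
        (\<lambda>k. integral\<^sup>L (M k) f) \<longlonglongrightarrow> integral\<^sup>L \<mu> f)"

definition monotone_set :: "(real \<times> real) set \<Rightarrow> bool" where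
  "monotone_set A \<longleftrightarrow> A \<subseteq> {0..1} \<times> {0..1} \<and>
     (\<forall>(t, s) \<in> A. A \<subseteq> ({0..t} \<times> {0..s}) \<union> ({t..1} \<times> {s..1}))"

definition LIS :: "nat \<Rightarrow> (nat \<Rightarrow> nat) \<Rightarrow> nat" where
  "LIS n \<sigma> = Max {card I | I. I \<subseteq> {1..n} \<and> strict_mono_on I \<sigma>}"

end

theory Submission
  imports Defs
begin

text \<open>Suppose \<open>LIS(\<sigma>\<^sub>k) \<ge> e N\<^sub>k\<close> for infinitely many \<open>k\<close>. Rounding the points
  \<open>(j/N\<^sub>k, \<sigma>\<^sub>k(j)/N\<^sub>k)\<close> of a longest increasing subsequence down to the grid of mesh
  \<open>2\<^sup>-\<^sup>m\<close> gives one of finitely many grid chains (for the coordinatewise order), and a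
  continuous cutoff of its neighbourhood has integral at least \<open>e\<close> against the permuton of
  \<open>\<sigma>\<^sub>k\<close>. By pigeonhole and weak convergence, for every \<open>m\<close> the \<open>8\<cdot>2\<^sup>-\<^sup>m\<close>-neighbourhood
  of some grid chain has \<open>\<pi>\<close>-mass at least \<open>e\<close>. Rounding a chain of level \<open>m+1\<close> to level
  \<open>m\<close> keeps its neighbourhood inside the coarser one, so a K\<ouml>nig-type argument over these
  finitely branching families yields one chain per level whose neighbourhoods intersect in a
  set of mass at least \<open>e\<close>. That intersection is a chain, i.e. a monotone set, hence
  \<open>\<pi>\<close>-null.\<close>

lemma permuton_imp_finite_measure: "permuton \<mu> \<Longrightarrow> finite_measure \<mu>"
  unfolding permuton_def prob_space_def by blast

lemma sets_permuton: "permuton \<mu> \<Longrightarrow> sets \<mu> = sets borel"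
  unfolding permuton_def by blast

lemma monotone_set_iff_chain:
  "monotone_set A \<longleftrightarrow> A \<subseteq> {0..1} \<times> {0..1} \<and> Complete_Partial_Order.chain (\<le>) A"
  unfolding monotone_set_def chain_def less_eq_prod_def by fastforce

lemma measure_unit_lebesgue_outside: "measure unit_lebesgue (- {0..1}) = 0"
proof -
  have "emeasure unit_lebesgue (- {0..1}) = (\<integral>\<^sup>+ x. indicator {0..1} x * indicator (- {0..1}) (x::real) \<partial>lborel)"
    unfolding unit_lebesgue_def by (rule emeasure_density) auto
  also have "\<dots> = (\<integral>\<^sup>+ x. 0 \<partial>(lborel :: real measure))"
    by (rule nn_integral_cong) (simp add: indicator_def)
  finally show ?thesis
    by (simp add: measure_def)
qed

lemma permuton_measure_outside_unit_square:
  assumes "permuton \<mu>"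
  shows "measure \<mu> (- ({0..1} \<times> {0..1})) = 0"
proof -
  have sets: "sets \<mu> = sets borel"
    and fst_marginal: "distr \<mu> lborel fst = unit_lebesgue"
    and snd_marginal: "distr \<mu> lborel snd = unit_lebesgue"
    using assms unfolding permuton_def by auto
  have space: "space \<mu> = UNIV"
    using sets_eq_imp_space_eq[OF sets] by simp
  have "(fst :: real \<times> real \<Rightarrow> real) \<in> borel_measurable borel"
    "(snd :: real \<times> real \<Rightarrow> real) \<in> borel_measurable borel"
    by (intro borel_measurable_continuous_onI continuous_intros)+
  then have meas: "fst \<in> measurable \<mu> lborel" "snd \<in> measurable \<mu> lborel"
    using measurable_cong_sets[OF sets refl] by auto
  have null: "measure \<mu> (fst -` (- {0..1})) = 0" "measure \<mu> (snd -` (- {0..1})) = 0"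
    using measure_distr[OF meas(1), of "- {0..1}"] measure_distr[OF meas(2), of "- {0..1}"]
      fst_marginal snd_marginal measure_unit_lebesgue_outside space by simp_all
  have "fst -` (- {0..1::real}) \<in> sets \<mu>" "snd -` (- {0..1::real}) \<in> sets \<mu>"
    using meas space by (auto simp: measurable_def)
  then have "measure \<mu> (fst -` (- {0..1}) \<union> snd -` (- {0..1})) \<le> 0"
    using measure_Un_le null by fastforce
  moreover have "- ({0..1} \<times> {0..1}) = fst -` (- {0..1::real}) \<union> snd -` (- {0..1::real})"
    by auto
  ultimately show ?thesis
    using measure_le_0_iff by metis
qed

lemma permuton_chain_null:
  assumes "permuton \<mu>"
    and null: "\<And>A. monotone_set A \<Longrightarrow> A \<in> sets \<mu> \<Longrightarrow> measure \<mu> A = 0"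
    and C: "C \<in> sets \<mu>" "Complete_Partial_Order.chain (\<le>) C"
  shows "measure \<mu> C = 0"
proof -
  let ?Q = "{0..1} \<times> {0..1::real}"
  have "finite_measure \<mu>" and sets: "sets \<mu> = sets borel"
    using permuton_imp_finite_measure[OF assms(1)] sets_permuton[OF assms(1)] .
  have Q: "?Q \<in> sets \<mu>" "- ?Q \<in> sets \<mu>"
    using sets by (simp_all add: borel_closed closed_Times)
  have "C \<inter> ?Q \<in> sets \<mu>"
    using C(1) Q(1) by (rule sets.Int)
  moreover have "monotone_set (C \<inter> ?Q)"
    unfolding monotone_set_iff_chain by (auto intro: chain_subset[OF C(2)])
  ultimately have "measure \<mu> (C \<inter> ?Q) = 0"
    by (rule null[rotated])
  have "measure \<mu> C \<le> measure \<mu> ((C \<inter> ?Q) \<union> - ?Q)"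
    using \<open>C \<inter> ?Q \<in> sets \<mu>\<close> Q(2)
    by (intro finite_measure.finite_measure_mono[OF \<open>finite_measure \<mu>\<close>]) auto
  also have "\<dots> \<le> measure \<mu> (C \<inter> ?Q) + measure \<mu> (- ?Q)"
    using \<open>C \<inter> ?Q \<in> sets \<mu>\<close> Q(2) by (rule measure_Un_le)
  also have "\<dots> = 0"
    using \<open>measure \<mu> (C \<inter> ?Q) = 0\<close> permuton_measure_outside_unit_square[OF assms(1)] by simp
  finally show ?thesis
    by (rule measure_le_0_iff[THEN iffD1])
qed

lemma dist_prod_le_twice:
  fixes p q :: "real \<times> real"
  assumes "\<bar>fst p - fst q\<bar> \<le> a" "\<bar>snd p - snd q\<bar> \<le> a"
  shows "dist p q \<le> 2 * a"
proof -
  have "dist p q = sqrt ((fst p - fst q)\<^sup>2 + (snd p - snd q)\<^sup>2)"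
    by (cases p; cases q) (simp add: dist_Pair_Pair dist_real_def)
  also have "\<dots> \<le> \<bar>fst p - fst q\<bar> + \<bar>snd p - snd q\<bar>"
    by (rule sqrt_sum_squares_le_sum_abs)
  finally show ?thesis
    using assms by linarith
qed

lemma abs_fst_diff_le_dist: "\<bar>fst p - fst q\<bar> \<le> dist p (q :: real \<times> real)"
  using dist_fst_le[of p q] by (simp add: dist_real_def)

lemma abs_snd_diff_le_dist: "\<bar>snd p - snd q\<bar> \<le> dist p (q :: real \<times> real)"
  using dist_snd_le[of p q] by (simp add: dist_real_def)

definition grid_floor :: "real \<Rightarrow> real \<times> real \<Rightarrow> real \<times> real" where
  "grid_floor M p = (of_int \<lfloor>M * fst p\<rfloor> / M, of_int \<lfloor>M * snd p\<rfloor> / M)"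

lemma floor_div_bounds:
  fixes M x :: real
  assumes "M > 0"
  shows "of_int \<lfloor>M * x\<rfloor> / M \<le> x" "x - 1 / M < of_int \<lfloor>M * x\<rfloor> / M"
proof -
  have "of_int \<lfloor>M * x\<rfloor> \<le> M * x"
    by simp
  then show "of_int \<lfloor>M * x\<rfloor> / M \<le> x"
    using assms by (simp add: divide_le_eq mult.commute)
  have "M * x - 1 < of_int \<lfloor>M * x\<rfloor>"
    by linarith
  then have "(M * x - 1) / M < of_int \<lfloor>M * x\<rfloor> / M"
    using assms by (rule divide_strict_right_mono)
  then show "x - 1 / M < of_int \<lfloor>M * x\<rfloor> / M"
    using assms by (simp add: diff_divide_distrib)
qed

lemma mono_grid_floor:
  assumes "M > 0"
  shows "mono (grid_floor M)"
proof
  fix p q :: "real \<times> real"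
  assume "p \<le> q"
  then have "\<lfloor>M * fst p\<rfloor> \<le> \<lfloor>M * fst q\<rfloor>" "\<lfloor>M * snd p\<rfloor> \<le> \<lfloor>M * snd q\<rfloor>"
    using assms by (auto intro!: floor_mono simp: less_eq_prod_def)
  then show "grid_floor M p \<le> grid_floor M q"
    using assms by (simp add: grid_floor_def less_eq_prod_def divide_right_mono)
qed

lemma dist_grid_floor_le:
  assumes "M > 0"
  shows "dist p (grid_floor M p) \<le> 2 / M"
  using dist_prod_le_twice[of p "grid_floor M p" "1 / M"]
    floor_div_bounds[OF assms, of "fst p"] floor_div_bounds[OF assms, of "snd p"]
  by (simp add: grid_floor_def)

lemma floor_mult_in_range:
  fixes M x :: real
  assumes "M > 0" "0 \<le> x" "x \<le> 1"
  shows "\<lfloor>M * x\<rfloor> \<in> {0..\<lfloor>M\<rfloor>}"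
  using assms by (auto intro!: floor_mono mult_left_le)

lemma grid_floor_image_unit_square:
  assumes "M > 0"
  shows "grid_floor M ` ({0..1} \<times> {0..1}) \<subseteq> {0..1} \<times> {0..1}"
proof -
  have "0 \<le> of_int \<lfloor>M * x\<rfloor> / M \<and> of_int \<lfloor>M * x\<rfloor> / M \<le> 1" if "0 \<le> x" "x \<le> 1" for x
  proof -
    have "of_int \<lfloor>M * x\<rfloor> \<le> M"
      using mult_left_le[OF that(2), of M] of_int_floor_le[of "M * x"] assms by linarith
    then show ?thesis
      using floor_mult_in_range[OF assms that] assms by simp
  qed
  then show ?thesis
    unfolding image_subset_iff grid_floor_def by (simp add: mem_Times_iff)
qed

lemma finite_grid_floor_unit_square:
  assumes "M > 0"
  shows "finite (grid_floor M ` ({0..1} \<times> {0..1}))"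
proof (rule finite_subset)
  have "of_int \<lfloor>M * x\<rfloor> / M \<in> (\<lambda>i. of_int i / M) ` {0..\<lfloor>M\<rfloor>}" if "0 \<le> x" "x \<le> 1" for x
    by (intro rev_image_eqI[OF floor_mult_in_range[OF assms that]]) simp
  then show "grid_floor M ` ({0..1} \<times> {0..1}) \<subseteq>
      (\<lambda>i. of_int i / M) ` {0..\<lfloor>M\<rfloor>} \<times> (\<lambda>i. of_int i / M) ` {0..\<lfloor>M\<rfloor>}"
    unfolding image_subset_iff grid_floor_def by (simp add: mem_Times_iff)
qed simp

definition grid_chains :: "nat \<Rightarrow> (real \<times> real) set set" where
  "grid_chains m = {S. S \<subseteq> grid_floor (2 ^ m) ` ({0..1} \<times> {0..1}) \<and> S \<noteq> {} \<and>
     Complete_Partial_Order.chain (\<le>) S}"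

lemma finite_grid_chains: "finite (grid_chains m)"
proof (rule finite_subset)
  show "grid_chains m \<subseteq> Pow (grid_floor (2 ^ m) ` ({0..1} \<times> {0..1}))"
    unfolding grid_chains_def by auto
qed (simp add: finite_grid_floor_unit_square)

lemma grid_chains_finite: "S \<in> grid_chains m \<Longrightarrow> finite S"
  unfolding grid_chains_def using finite_grid_floor_unit_square[of "2 ^ m"] by (auto intro: finite_subset)

definition thickening :: "real \<Rightarrow> 'a::metric_space set \<Rightarrow> 'a set" where
  "thickening r S = (\<Union>s\<in>S. cball s r)"

lemma closed_thickening: "finite S \<Longrightarrow> closed (thickening r S)"
  unfolding thickening_def by (intro closed_UN) auto

lemma grid_chains_coarsening:
  assumes "S' \<in> grid_chains (Suc m)"
  shows "\<exists>S\<in>grid_chains m. thickening (8 / 2 ^ Suc m) S' \<subseteq> thickening (8 / 2 ^ m) S"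
proof
  let ?M = "2 ^ m :: real"
  show "grid_floor ?M ` S' \<in> grid_chains m"
  proof -
    have "S' \<subseteq> grid_floor (2 ^ Suc m) ` ({0..1} \<times> {0..1})"
      using assms unfolding grid_chains_def by blast
    also have "\<dots> \<subseteq> {0..1} \<times> {0..1}"
      by (rule grid_floor_image_unit_square) simp
    finally have "grid_floor ?M ` S' \<subseteq> grid_floor ?M ` ({0..1} \<times> {0..1})"
      by (rule image_mono)
    moreover have "Complete_Partial_Order.chain (\<le>) (grid_floor ?M ` S')"
      using assms mono_grid_floor[of ?M] unfolding grid_chains_def
      by (auto intro: chain_imageI monoD)
    ultimately show ?thesis
      using assms unfolding grid_chains_def by auto
  qed
  show "thickening (8 / 2 ^ Suc m) S' \<subseteq> thickening (8 / ?M) (grid_floor ?M ` S')"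
  proof
    fix x
    assume "x \<in> thickening (8 / 2 ^ Suc m) S'"
    then obtain s where "s \<in> S'" and "dist s x \<le> 8 / 2 ^ Suc m"
      unfolding thickening_def by auto
    moreover have "dist (grid_floor ?M s) s \<le> 2 / ?M"
      using dist_grid_floor_le[of ?M s] by (simp add: dist_commute)
    ultimately have "dist (grid_floor ?M s) x \<le> 2 / ?M + 4 / ?M"
      using dist_triangle[of "grid_floor ?M s" x s] by simp
    also have "\<dots> \<le> 8 / ?M"
      by (simp add: field_simps)
    finally have "dist (grid_floor ?M s) x \<le> 8 / ?M" .
    then show "x \<in> thickening (8 / ?M) (grid_floor ?M ` S')"
      using \<open>s \<in> S'\<close> unfolding thickening_def by auto
  qed
qed

lemma chain_thickening_almost_comparable:
  fixes p q :: "real \<times> real"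
  assumes "Complete_Partial_Order.chain (\<le>) S" "p \<in> thickening r S" "q \<in> thickening r S"
  shows "p \<le> q + (2 * r, 2 * r) \<or> q \<le> p + (2 * r, 2 * r)"
proof -
  obtain s t where st: "s \<in> S" "t \<in> S" "dist s p \<le> r" "dist t q \<le> r"
    using assms(2,3) unfolding thickening_def by auto
  then have "\<bar>fst s - fst p\<bar> \<le> r" "\<bar>snd s - snd p\<bar> \<le> r"
    "\<bar>fst t - fst q\<bar> \<le> r" "\<bar>snd t - snd q\<bar> \<le> r"
    using abs_fst_diff_le_dist abs_snd_diff_le_dist order_trans by blast+
  moreover have "s \<le> t \<or> t \<le> s"
    using assms(1) st(1,2) unfolding chain_def by blast
  ultimately show ?thesis
    unfolding less_eq_prod_def by auto
qed

lemma chain_Inter_thickening: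
  fixes S :: "nat \<Rightarrow> (real \<times> real) set"
  assumes "\<And>m. Complete_Partial_Order.chain (\<le>) (S m)" "r \<longlonglongrightarrow> 0"
  shows "Complete_Partial_Order.chain (\<le>) (\<Inter>m. thickening (r m) (S m))"
proof (rule chainI)
  fix p q
  assume "p \<in> (\<Inter>m. thickening (r m) (S m))" "q \<in> (\<Inter>m. thickening (r m) (S m))"
  then have close: "p \<le> q + (2 * r m, 2 * r m) \<or> q \<le> p + (2 * r m, 2 * r m)" for m
    using chain_thickening_almost_comparable[OF assms(1)] by blast
  show "p \<le> q \<or> q \<le> p"
  proof (rule ccontr)
    assume "\<not> (p \<le> q \<or> q \<le> p)"
    then have "0 < min (max (fst p - fst q) (snd p - snd q)) (max (fst q - fst p) (snd q - snd p))"
      (is "0 < ?gap") unfolding less_eq_prod_def by auto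
    then obtain m where "\<bar>r m\<bar> < ?gap / 2"
      using assms(2) half_gt_zero LIMSEQ_D[of r 0] by (metis le_refl real_norm_def diff_zero)
    then show False
      using close[of m] unfolding less_eq_prod_def by auto
  qed
qed

text \<open>Since \<open>infdist x {} = 0\<close>, the cutoff of the empty set is constantly \<open>1\<close>.\<close>

definition cutoff :: "real \<Rightarrow> 'a::metric_space set \<Rightarrow> 'a \<Rightarrow> real" where
  "cutoff r S x = max 0 (min 1 (2 - infdist x S / r))"

lemma continuous_on_cutoff: "continuous_on UNIV (cutoff r S)"
  unfolding cutoff_def divide_inverse by (intro continuous_intros)

lemma cutoff_bounds: "0 \<le> cutoff r S x" "cutoff r S x \<le> 1"
  unfolding cutoff_def by auto

lemma bounded_range_cutoff: "bounded (range (cutoff r S))"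
  unfolding bounded_iff by (auto simp: cutoff_bounds abs_of_nonneg intro!: exI[of _ 1])

lemma cutoff_eq_1:
  assumes "r > 0" "x \<in> thickening r S"
  shows "cutoff r S x = 1"
proof -
  obtain s where "s \<in> S" "dist s x \<le> r"
    using assms(2) unfolding thickening_def by auto
  then have "infdist x S \<le> r"
    using infdist_le[of s S x] by (simp add: dist_commute)
  then show ?thesis
    using assms(1) by (simp add: cutoff_def field_simps)
qed

lemma cutoff_le_indicator_thickening:
  fixes S :: "'a::heine_borel set"
  assumes "r > 0" "closed S" "S \<noteq> {}"
  shows "cutoff r S x \<le> indicator (thickening (2 * r) S) x"
proof (cases "x \<in> thickening (2 * r) S")
  case False
  obtain s where "s \<in> S" "infdist x S = dist x s"
    using infdist_attains_inf[OF assms(2,3)] by blast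
  with False have "2 * r < infdist x S"
    unfolding thickening_def by (auto simp: dist_commute)
  with False show ?thesis
    using assms(1) by (simp add: cutoff_def field_simps)
qed (simp add: cutoff_bounds)

definition perm_point :: "nat \<Rightarrow> (nat \<Rightarrow> nat) \<Rightarrow> nat \<Rightarrow> real \<times> real" where
  "perm_point n \<sigma> j = (real j / real n, real (\<sigma> j) / real n)"

definition perm_cell :: "nat \<Rightarrow> (nat \<Rightarrow> nat) \<Rightarrow> nat \<Rightarrow> (real \<times> real) set" where
  "perm_cell n \<sigma> j = {(real j - 1) / real n <..< real j / real n} \<times>
     {(real (\<sigma> j) - 1) / real n <..< real (\<sigma> j) / real n}"

lemma compact_perm_squares: "compact (perm_squares n \<sigma>)"
  unfolding perm_squares_def by (intro compact_UN compact_Times compact_Icc) auto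

lemma emeasure_permuton_of:
  assumes "A \<in> sets borel"
  shows "emeasure (permuton_of n \<sigma>) A = ennreal (real n) * emeasure lborel (A \<inter> perm_squares n \<sigma>)"
proof -
  have Q: "perm_squares n \<sigma> \<in> sets borel"
    using compact_perm_squares by (simp add: compact_imp_closed)
  have "emeasure (permuton_of n \<sigma>) A =
      (\<integral>\<^sup>+ x. ennreal (real n) * indicator (perm_squares n \<sigma>) x * indicator A x \<partial>lborel)"
    unfolding permuton_of_def using assms Q by (subst emeasure_density) auto
  also have "\<dots> = (\<integral>\<^sup>+ x. ennreal (real n) * indicator (A \<inter> perm_squares n \<sigma>) x \<partial>lborel)"
    by (rule nn_integral_cong) (simp split: split_indicator)
  also have "\<dots> = ennreal (real n) * emeasure lborel (A \<inter> perm_squares n \<sigma>)"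
    using assms Q by (intro nn_integral_cmult_indicator) auto
  finally show ?thesis .
qed

lemma finite_measure_permuton_of: "finite_measure (permuton_of n \<sigma>)"
proof (rule finite_measureI)
  have "emeasure (permuton_of n \<sigma>) (space (permuton_of n \<sigma>)) =
      ennreal (real n) * emeasure lborel (perm_squares n \<sigma>)"
    using emeasure_permuton_of[of UNIV n \<sigma>] by (simp add: permuton_of_def)
  also have "\<dots> < \<infinity>"
    using emeasure_compact_finite[OF compact_perm_squares] by (simp add: ennreal_mult_less_top)
  finally show "emeasure (permuton_of n \<sigma>) (space (permuton_of n \<sigma>)) \<noteq> \<infinity>"
    by simp
qed

lemma perm_cell_fst_bounds:
  assumes "x \<in> perm_cell n \<sigma> j"
  shows "real j - 1 < real n * fst x" "real n * fst x < real j"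
proof -
  have "(real j - 1) / real n < fst x" "fst x < real j / real n"
    using assms by (auto simp: perm_cell_def)
  moreover from this have "real n > 0"
    by (cases "n = 0") auto
  ultimately show "real j - 1 < real n * fst x" "real n * fst x < real j"
    by (simp_all add: field_simps)
qed

lemma disjoint_family_perm_cell: "disjoint_family (perm_cell n \<sigma>)"
  unfolding disjoint_family_on_def
proof (intro ballI impI)
  fix i j :: nat
  assume "i \<noteq> j"
  show "perm_cell n \<sigma> i \<inter> perm_cell n \<sigma> j = {}"
  proof (rule ccontr)
    assume "perm_cell n \<sigma> i \<inter> perm_cell n \<sigma> j \<noteq> {}"
    then obtain x where "x \<in> perm_cell n \<sigma> i" "x \<in> perm_cell n \<sigma> j"
      by blast
    then have "real i < real j + 1" "real j < real i + 1"
      using perm_cell_fst_bounds by fastforce+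
    then show False
      using \<open>i \<noteq> j\<close> by linarith
  qed
qed

lemma emeasure_perm_cell:
  assumes "n > 0"
  shows "emeasure lborel (perm_cell n \<sigma> j) = ennreal (1 / real n ^ 2)"
proof -
  have "emeasure lborel (perm_cell n \<sigma> j) =
      emeasure lborel {(real j - 1) / real n <..< real j / real n} *
      emeasure lborel {(real (\<sigma> j) - 1) / real n <..< real (\<sigma> j) / real n}"
    unfolding perm_cell_def lborel_prod[symmetric] by (rule lborel.emeasure_pair_measure_Times) auto
  also have "\<dots> = ennreal (1 / real n) * ennreal (1 / real n)"
    using assms by (simp add: diff_divide_distrib)
  finally show ?thesis
    by (simp add: ennreal_mult[symmetric] power2_eq_square)
qed

lemma perm_cell_subset_perm_squares:
  "j \<in> {1..n} \<Longrightarrow> perm_cell n \<sigma> j \<subseteq> perm_squares n \<sigma>"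
  unfolding perm_cell_def perm_squares_def by fastforce

lemma card_div_le_integral_permuton_of:
  fixes g :: "real \<times> real \<Rightarrow> real"
  assumes "0 < n" "I \<subseteq> {1..n}" "g \<in> borel_measurable borel" "\<And>x. 0 \<le> g x" "\<And>x. g x \<le> 1"
    and one: "\<And>j x. j \<in> I \<Longrightarrow> x \<in> perm_cell n \<sigma> j \<Longrightarrow> g x = 1"
  shows "real (card I) / real n \<le> integral\<^sup>L (permuton_of n \<sigma>) g"
proof -
  interpret finite_measure "permuton_of n \<sigma>"
    by (rule finite_measure_permuton_of)
  let ?U = "\<Union>j\<in>I. perm_cell n \<sigma> j"
  have "finite I"
    using assms(2) finite_subset by blast
  have cells: "perm_cell n \<sigma> ` I \<subseteq> sets borel"
    unfolding perm_cell_def by (auto intro!: borel_open open_Times)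
  have "emeasure lborel ?U = (\<Sum>j\<in>I. emeasure lborel (perm_cell n \<sigma> j))"
    using cells \<open>finite I\<close> disjoint_family_on_mono[OF subset_UNIV disjoint_family_perm_cell]
    by (simp add: sum_emeasure)
  also have "\<dots> = ennreal (real (card I) / real n ^ 2)"
    using assms(1) by (simp add: emeasure_perm_cell ennreal_of_nat_eq_real_of_nat ennreal_mult'[symmetric])
  finally have U: "emeasure lborel ?U = ennreal (real (card I) / real n ^ 2)" .
  have "?U \<subseteq> perm_squares n \<sigma>"
    using perm_cell_subset_perm_squares assms(2) by blast
  moreover have U_sets: "?U \<in> sets borel"
    using cells \<open>finite I\<close> by blast
  ultimately have "emeasure (permuton_of n \<sigma>) ?U = ennreal (real n) * ennreal (real (card I) / real n ^ 2)"
    using U by (simp add: emeasure_permuton_of Int_absorb2)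
  also have "\<dots> = ennreal (real (card I) / real n)"
    using assms(1) by (simp add: ennreal_mult[symmetric] power2_eq_square)
  finally have "real (card I) / real n = measure (permuton_of n \<sigma>) ?U"
    by (simp add: measure_def)
  also have "\<dots> = integral\<^sup>L (permuton_of n \<sigma>) (indicator ?U)"
    using U_sets emeasure_finite by (simp add: permuton_of_def)
  also have "\<dots> \<le> integral\<^sup>L (permuton_of n \<sigma>) g"
  proof (rule integral_mono')
    show "integrable (permuton_of n \<sigma>) g"
      using assms(3-5) by (intro integrable_const_bound[of _ 1]) (auto simp: permuton_of_def)
    show "indicator ?U x \<le> g x" for x
      using one[of _ x] assms(4)[of x] by (cases "x \<in> ?U") auto
    show "0 \<le> g x" for x
      by (rule assms(4))
  qed
  finally show ?thesis .
qed

lemma LIS_witness: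
  assumes "0 < n"
  obtains I where "I \<subseteq> {1..n}" "I \<noteq> {}" "strict_mono_on I \<sigma>" "card I = LIS n \<sigma>"
proof -
  let ?A = "{card I | I. I \<subseteq> {1..n} \<and> strict_mono_on I \<sigma>}"
  have "?A \<subseteq> {..n}"
  proof
    fix c
    assume "c \<in> ?A"
    then obtain I where "c = card I" "I \<subseteq> {1..n}"
      by blast
    then show "c \<in> {..n}"
      using card_mono[of "{1..n}" I] by simp
  qed
  then have finite: "finite ?A"
    by (rule finite_subset) simp
  have singleton: "card {1} \<in> ?A"
    using assms by (intro CollectI exI[of _ "{1}"]) (simp add: strict_mono_on_def)
  then have "?A \<noteq> {}"
    by blast
  then have "LIS n \<sigma> \<in> ?A"
    unfolding LIS_def by (rule Max_in[OF finite])
  then obtain I where I: "I \<subseteq> {1..n}" "strict_mono_on I \<sigma>" "LIS n \<sigma> = card I"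
    unfolding mem_Collect_eq by (elim exE conjE)
  have "card {1} \<le> LIS n \<sigma>"
    unfolding LIS_def using finite singleton by (rule Max_ge)
  with I(3) have "I \<noteq> {}"
    by (cases "I = {}") simp_all
  with I show ?thesis
    by (intro that) simp_all
qed

lemma chain_perm_point_image:
  assumes "strict_mono_on I \<sigma>"
  shows "Complete_Partial_Order.chain (\<le>) (perm_point n \<sigma> ` I)"
proof (rule chain_imageI)
  show "Complete_Partial_Order.chain (\<le>) I"
    by (auto simp: chain_def)
  fix i j
  assume "i \<in> I" "j \<in> I" "i \<le> j"
  with assms have "\<sigma> i \<le> \<sigma> j"
    by (rule strict_mono_on_leD)
  with \<open>i \<le> j\<close> show "perm_point n \<sigma> i \<le> perm_point n \<sigma> j"
    by (simp add: perm_point_def less_eq_prod_def divide_right_mono)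
qed

lemma increasing_set_grid_chain:
  assumes "\<sigma> permutes {1..n}" "I \<subseteq> {1..n}" "I \<noteq> {}" "strict_mono_on I \<sigma>"
  shows "grid_floor (2 ^ m) ` perm_point n \<sigma> ` I \<in> grid_chains m"
proof -
  have "perm_point n \<sigma> j \<in> {0..1} \<times> {0..1}" if "j \<in> I" for j
  proof -
    have "j \<in> {1..n}" "\<sigma> j \<in> {1..n}"
      using that assms(2) permutes_in_image[OF assms(1)] by blast+
    then have "real j / real n \<le> 1" "real (\<sigma> j) / real n \<le> 1"
      by (simp_all add: divide_le_eq_1)
    then show ?thesis
      by (simp add: perm_point_def)
  qed
  then have "grid_floor (2 ^ m) ` perm_point n \<sigma> ` I \<subseteq> grid_floor (2 ^ m) ` ({0..1} \<times> {0..1})"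
    by blast
  moreover have "Complete_Partial_Order.chain (\<le>) (grid_floor (2 ^ m) ` perm_point n \<sigma> ` I)"
    using chain_imageI[OF chain_perm_point_image[OF assms(4)], where le_b = "(\<le>)" and f = "grid_floor (2 ^ m)"]
      mono_grid_floor[of "2 ^ m"] by (simp add: monoD)
  ultimately show ?thesis
    using assms(3) by (simp add: grid_chains_def)
qed

lemma dist_perm_cell_grid_floor:
  assumes "0 < M" "M \<le> real n" "x \<in> perm_cell n \<sigma> j"
  shows "dist x (grid_floor M (perm_point n \<sigma> j)) \<le> 4 / M"
proof -
  have "1 / real n \<le> 1 / M"
    using assms(1,2) by (simp add: frac_le)
  moreover have "real j / real n - 1 / real n < fst x" "fst x < real j / real n"
    "real (\<sigma> j) / real n - 1 / real n < snd x" "snd x < real (\<sigma> j) / real n"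
    using assms(3) unfolding perm_cell_def diff_divide_distrib mem_Times_iff by simp_all
  ultimately have "\<bar>fst x - fst (perm_point n \<sigma> j)\<bar> \<le> 1 / M" "\<bar>snd x - snd (perm_point n \<sigma> j)\<bar> \<le> 1 / M"
    unfolding perm_point_def abs_le_iff fst_conv snd_conv by linarith+
  then have "dist x (perm_point n \<sigma> j) \<le> 2 * (1 / M)"
    by (rule dist_prod_le_twice)
  moreover have "dist (perm_point n \<sigma> j) (grid_floor M (perm_point n \<sigma> j)) \<le> 2 / M"
    using assms(1) by (rule dist_grid_floor_le)
  ultimately have "dist x (grid_floor M (perm_point n \<sigma> j)) \<le> 2 / M + 2 / M"
    using dist_triangle[of x "grid_floor M (perm_point n \<sigma> j)" "perm_point n \<sigma> j"] by simp
  then show ?thesis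
    by simp
qed

lemma LIS_le_integral_cutoff:
  assumes "\<sigma> permutes {1..n}" "2 ^ m \<le> n"
  shows "\<exists>S\<in>grid_chains m. real (LIS n \<sigma>) / real n \<le> integral\<^sup>L (permuton_of n \<sigma>) (cutoff (4 / 2 ^ m) S)"
proof -
  have "0 < n"
    by (rule less_le_trans[OF _ assms(2)]) simp
  then obtain I where I: "I \<subseteq> {1..n}" "I \<noteq> {}" "strict_mono_on I \<sigma>" "card I = LIS n \<sigma>"
    by (rule LIS_witness)
  let ?S = "grid_floor (2 ^ m) ` perm_point n \<sigma> ` I"
  have "real (card I) / real n \<le> integral\<^sup>L (permuton_of n \<sigma>) (cutoff (4 / 2 ^ m) ?S)"
  proof (rule card_div_le_integral_permuton_of[OF \<open>0 < n\<close> I(1)])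
    show "cutoff (4 / 2 ^ m) ?S \<in> borel_measurable borel"
      by (intro borel_measurable_continuous_onI continuous_on_cutoff)
    show "0 \<le> cutoff (4 / 2 ^ m) ?S x" "cutoff (4 / 2 ^ m) ?S x \<le> 1" for x
      by (rule cutoff_bounds)+
    fix j x
    assume "j \<in> I" "x \<in> perm_cell n \<sigma> j"
    then have "dist x (grid_floor (2 ^ m) (perm_point n \<sigma> j)) \<le> 4 / 2 ^ m"
      using assms(2) by (intro dist_perm_cell_grid_floor) simp_all
    moreover have "grid_floor (2 ^ m) (perm_point n \<sigma> j) \<in> ?S"
      using \<open>j \<in> I\<close> by blast
    ultimately have "x \<in> thickening (4 / 2 ^ m) ?S"
      unfolding thickening_def by (intro UN_I) (simp_all add: dist_commute)
    then show "cutoff (4 / 2 ^ m) ?S x = 1"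
      by (intro cutoff_eq_1) simp_all
  qed
  moreover have "?S \<in> grid_chains m"
    using increasing_set_grid_chain[OF assms(1) I(1-3)] .
  ultimately show ?thesis
    using I(4) by metis
qed

lemma permuton_heavy_grid_chain_thickening:
  assumes "permuton \<mu>" "\<And>k. \<sigma> k permutes {1..N k}" "filterlim N at_top sequentially"
    and weak: "weak_conv_plane (\<lambda>k. permuton_of (N k) (\<sigma> k)) \<mu>"
    and often: "\<exists>\<^sub>F k in sequentially. e \<le> real (LIS (N k) (\<sigma> k)) / real (N k)"
  shows "\<exists>S\<in>grid_chains m. e \<le> measure \<mu> (thickening (8 / 2 ^ m) S)"
proof -
  let ?r = "4 / 2 ^ m :: real"
  let ?\<pi> = "\<lambda>k. permuton_of (N k) (\<sigma> k)"
  interpret finite_measure \<mu>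
    using assms(1) by (rule permuton_imp_finite_measure)
  have sets: "sets \<mu> = sets borel"
    using assms(1) by (rule sets_permuton)
  have "\<forall>\<^sub>F k in sequentially. 2 ^ m \<le> N k"
    using assms(3) by (simp add: filterlim_at_top)
  with often have "\<exists>\<^sub>F k in sequentially. 2 ^ m \<le> N k \<and> e \<le> real (LIS (N k) (\<sigma> k)) / real (N k)"
    by (rule frequently_eventually_conj)
  then have "\<exists>\<^sub>F k in sequentially. \<exists>S\<in>grid_chains m. e \<le> integral\<^sup>L (?\<pi> k) (cutoff ?r S)"
    by (rule frequently_elim1) (use LIS_le_integral_cutoff[OF assms(2)] order_trans in blast)
  from frequently_bex_finite[OF finite_grid_chains this] obtain S where S: "S \<in> grid_chains m"
    and often_S: "\<exists>\<^sub>F k in sequentially. e \<le> integral\<^sup>L (?\<pi> k) (cutoff ?r S)"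
    by blast
  have lim: "(\<lambda>k. integral\<^sup>L (?\<pi> k) (cutoff ?r S)) \<longlonglongrightarrow> integral\<^sup>L \<mu> (cutoff ?r S)"
    using weak continuous_on_cutoff bounded_range_cutoff unfolding weak_conv_plane_def by blast
  have "e \<le> integral\<^sup>L \<mu> (cutoff ?r S)"
  proof (rule ccontr)
    assume "\<not> e \<le> integral\<^sup>L \<mu> (cutoff ?r S)"
    then have "\<forall>\<^sub>F k in sequentially. integral\<^sup>L (?\<pi> k) (cutoff ?r S) < e"
      using lim by (simp add: order_tendstoD(2))
    with often_S show False
      unfolding frequently_def by (simp add: not_le)
  qed
  also have "\<dots> \<le> integral\<^sup>L \<mu> (indicator (thickening (2 * ?r) S))"
  proof (rule integral_mono)
    have closed: "closed S" "S \<noteq> {}"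
      using finite_imp_closed[OF grid_chains_finite[OF S]] S by (simp_all add: grid_chains_def)
    show "integrable \<mu> (cutoff ?r S)"
    proof (rule integrable_const_bound[of _ 1])
      show "AE x in \<mu>. norm (cutoff ?r S x) \<le> 1"
        by (simp add: cutoff_bounds abs_of_nonneg)
      show "cutoff ?r S \<in> borel_measurable \<mu>"
        unfolding measurable_cong_sets[OF sets refl]
        by (intro borel_measurable_continuous_onI continuous_on_cutoff)
    qed
    show "integrable \<mu> (indicator (thickening (2 * ?r) S) :: _ \<Rightarrow> real)"
      using sets closed_thickening[OF grid_chains_finite[OF S]]
      by (intro integrable_real_indicator) (simp_all add: less_top[symmetric])
    show "cutoff ?r S x \<le> indicator (thickening (2 * ?r) S) x" for x
      using closed by (intro cutoff_le_indicator_thickening) simp_all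
  qed
  also have "\<dots> = measure \<mu> (thickening (8 / 2 ^ m) S)"
    using sets closed_thickening[OF grid_chains_finite[OF S]] by simp
  finally show ?thesis
    using S by blast
qed

lemma refinement_iter:
  assumes "\<And>m j. j \<in> G (Suc m) \<Longrightarrow> \<exists>i\<in>G m. T (Suc m) j \<subseteq> T m i" "m \<le> j" "w \<in> G j"
  shows "\<exists>i\<in>G m. T j w \<subseteq> T m i"
  using assms(2,3)
proof (induction j arbitrary: w rule: dec_induct)
  case (step j)
  then show ?case
    using assms(1) by (meson order_trans)
qed blast

lemma (in finite_measure) heavy_refinement_step:
  fixes T :: "nat \<Rightarrow> 'i \<Rightarrow> 'a set"
  assumes finite: "finite (G m)"
    and sets: "\<And>m i. i \<in> G m \<Longrightarrow> T m i \<in> sets M"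
    and refine: "\<And>m j w. m \<le> j \<Longrightarrow> w \<in> G j \<Longrightarrow> \<exists>i\<in>G m. T j w \<subseteq> T m i"
    and C: "C \<in> sets M" "\<And>j. \<exists>w\<in>G j. e \<le> measure M (T j w \<inter> C)"
  shows "\<exists>i\<in>G m. \<forall>j. \<exists>w\<in>G j. e \<le> measure M (T j w \<inter> (C \<inter> T m i))"
proof -
  have "\<forall>\<^sub>F j in sequentially. \<exists>i\<in>G m. \<exists>w\<in>G j. T j w \<subseteq> T m i \<and> e \<le> measure M (T j w \<inter> C)"
    unfolding eventually_sequentially
  proof (intro exI[of _ m] allI impI)
    fix j
    assume "m \<le> j"
    obtain w where "w \<in> G j" "e \<le> measure M (T j w \<inter> C)"
      using C(2) by blast
    moreover obtain i where "i \<in> G m" "T j w \<subseteq> T m i"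
      using refine[OF \<open>m \<le> j\<close> \<open>w \<in> G j\<close>] by blast
    ultimately show "\<exists>i\<in>G m. \<exists>w\<in>G j. T j w \<subseteq> T m i \<and> e \<le> measure M (T j w \<inter> C)"
      by blast
  qed
  then have "\<exists>\<^sub>F j in sequentially. \<exists>i\<in>G m. \<exists>w\<in>G j. T j w \<subseteq> T m i \<and> e \<le> measure M (T j w \<inter> C)"
    by (rule eventually_frequently[OF sequentially_bot])
  from frequently_bex_finite[OF finite this] obtain i where i: "i \<in> G m"
    and often: "\<exists>\<^sub>F j in sequentially. \<exists>w\<in>G j. T j w \<subseteq> T m i \<and> e \<le> measure M (T j w \<inter> C)"
    by blast
  have "\<exists>w'\<in>G j'. e \<le> measure M (T j' w' \<inter> (C \<inter> T m i))" for j'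
  proof -
    obtain j w where "j' \<le> j" "w \<in> G j" "T j w \<subseteq> T m i" "e \<le> measure M (T j w \<inter> C)"
      using often unfolding frequently_sequentially by blast
    moreover obtain w' where "w' \<in> G j'" "T j w \<subseteq> T j' w'"
      using refine[OF \<open>j' \<le> j\<close> \<open>w \<in> G j\<close>] by blast
    moreover have "measure M (T j w \<inter> C) \<le> measure M (T j' w' \<inter> (C \<inter> T m i))"
      using calculation C(1) sets i by (intro finite_measure_mono) auto
    ultimately show ?thesis
      by (meson order_trans)
  qed
  then show ?thesis
    using i by blast
qed

text \<open>K\<ouml>nig's lemma, measure version: the sets \<open>T m i\<close> with \<open>i \<in> G m\<close> form the finite
  levels of a tree ordered by inclusion.\<close>

lemma (in finite_measure) measure_Inter_branch_ge:
  fixes T :: "nat \<Rightarrow> 'i \<Rightarrow> 'a set" and G :: "nat \<Rightarrow> 'i set"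
  assumes finite: "\<And>m. finite (G m)"
    and sets: "\<And>m i. i \<in> G m \<Longrightarrow> T m i \<in> sets M"
    and refine: "\<And>m j. j \<in> G (Suc m) \<Longrightarrow> \<exists>i\<in>G m. T (Suc m) j \<subseteq> T m i"
    and heavy: "\<And>m. \<exists>i\<in>G m. e \<le> measure M (T m i)"
  shows "\<exists>b. (\<forall>m. b m \<in> G m) \<and> e \<le> measure M (\<Inter>m. T m (b m))"
proof -
  define heavy_in where
    "heavy_in C \<longleftrightarrow> C \<in> sets M \<and> (\<forall>j. \<exists>w\<in>G j. e \<le> measure M (T j w \<inter> C))" for C
  have "heavy_in (space M)"
    using heavy sets sets.sets_into_space unfolding heavy_in_def by (simp add: Int_absorb2)
  moreover have "\<exists>C'. heavy_in C' \<and> (\<exists>i\<in>G m. C' = C \<inter> T m i)" if "heavy_in C" for m C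
  proof -
    have C: "C \<in> sets M" "\<And>j. \<exists>w\<in>G j. e \<le> measure M (T j w \<inter> C)"
      using that unfolding heavy_in_def by blast+
    have refine_iter: "\<exists>i\<in>G m. T j w \<subseteq> T m i" if "m \<le> j" "w \<in> G j" for m j w
      using refine that by (rule refinement_iter)
    from heavy_refinement_step[where T = T and G = G and m = m, OF finite sets refine_iter C] obtain i where
      "i \<in> G m" "\<forall>j. \<exists>w\<in>G j. e \<le> measure M (T j w \<inter> (C \<inter> T m i))"
      by blast
    moreover have "C \<inter> T m i \<in> sets M"
      using C(1) sets[OF \<open>i \<in> G m\<close>] by blast
    ultimately show ?thesis
      unfolding heavy_in_def by blast
  qed
  ultimately have "\<exists>C. \<forall>m. heavy_in (C m) \<and> (\<exists>i\<in>G m. C (Suc m) = C m \<inter> T m i)"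
    by (intro dependent_nat_choice) blast+
  then obtain C where C: "\<And>m. heavy_in (C m)" and "\<forall>m. \<exists>i. i \<in> G m \<and> C (Suc m) = C m \<inter> T m i"
    by blast
  from choice[OF this(2)] obtain b where b: "\<And>m. b m \<in> G m" "\<And>m. C (Suc m) = C m \<inter> T m (b m)"
    by blast
  have C_sets: "range C \<subseteq> sets M"
    using C unfolding heavy_in_def by blast
  have "e \<le> measure M (C m)" for m
  proof -
    obtain w where "w \<in> G m" "e \<le> measure M (T m w \<inter> C m)"
      using C[of m] unfolding heavy_in_def by blast
    moreover have "measure M (T m w \<inter> C m) \<le> measure M (C m)"
      using C_sets by (intro finite_measure_mono) auto
    ultimately show ?thesis
      by linarith
  qed
  moreover have "(\<lambda>m. measure M (C m)) \<longlonglongrightarrow> measure M (\<Inter>m. C m)"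
    using C_sets b(2) by (intro finite_Lim_measure_decseq) (auto simp: decseq_Suc_iff)
  ultimately have "e \<le> measure M (\<Inter>m. C m)"
    by (intro LIMSEQ_le_const) auto
  also have "\<dots> \<le> measure M (\<Inter>m. T m (b m))"
  proof (rule finite_measure_mono)
    show "(\<Inter>m. C m) \<subseteq> (\<Inter>m. T m (b m))"
      using b(2) by blast
    show "(\<Inter>m. T m (b m)) \<in> sets M"
      using b(1) sets by blast
  qed
  finally show ?thesis
    using b(1) by blast
qed

lemma not_frequently_LIS_ratio_ge:
  assumes "permuton \<mu>" "\<And>k. \<sigma> k permutes {1..N k}" "filterlim N at_top sequentially"
    and "weak_conv_plane (\<lambda>k. permuton_of (N k) (\<sigma> k)) \<mu>"
    and "\<And>A. monotone_set A \<Longrightarrow> A \<in> sets \<mu> \<Longrightarrow> measure \<mu> A = 0"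
    and "e > 0"
  shows "\<not> (\<exists>\<^sub>F k in sequentially. e \<le> real (LIS (N k) (\<sigma> k)) / real (N k))"
proof
  let ?T = "\<lambda>m S. thickening (8 / 2 ^ m) S"
  have sets: "sets \<mu> = sets borel"
    using assms(1) by (rule sets_permuton)
  assume "\<exists>\<^sub>F k in sequentially. e \<le> real (LIS (N k) (\<sigma> k)) / real (N k)"
  then have "\<exists>S\<in>grid_chains m. e \<le> measure \<mu> (?T m S)" for m
    by (rule permuton_heavy_grid_chain_thickening[OF assms(1-4)])
  moreover have "?T m S \<in> sets \<mu>" if "S \<in> grid_chains m" for m S
    using sets closed_thickening[OF grid_chains_finite[OF that]] by simp
  ultimately obtain S where S: "\<And>m. S m \<in> grid_chains m" and heavy: "e \<le> measure \<mu> (\<Inter>m. ?T m (S m))"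
    using finite_measure.measure_Inter_branch_ge[where T = ?T and G = grid_chains,
        OF permuton_imp_finite_measure[OF assms(1)] finite_grid_chains _ grid_chains_coarsening]
    by blast
  have "Complete_Partial_Order.chain (\<le>) (\<Inter>m. ?T m (S m))"
    using S by (intro chain_Inter_thickening LIMSEQ_divide_realpow_zero) (auto simp: grid_chains_def)
  moreover have "(\<Inter>m. ?T m (S m)) \<in> sets \<mu>"
    unfolding sets by (intro borel_closed closed_INT ballI closed_thickening grid_chains_finite[OF S])
  ultimately have "measure \<mu> (\<Inter>m. ?T m (S m)) = 0"
    using permuton_chain_null[OF assms(1,5)] by blast
  with heavy \<open>e > 0\<close> show False
    by linarith
qed

theorem proposition3p2:
  fixes \<mu> :: "(real \<times> real) measure"
    and N :: "nat \<Rightarrow> nat"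
    and \<sigma> :: "nat \<Rightarrow> nat \<Rightarrow> nat"
  assumes "permuton \<mu>"
    and "\<And>k. \<sigma> k permutes {1..N k}"
    and "filterlim N at_top sequentially"
    and "weak_conv_plane (\<lambda>k. permuton_of (N k) (\<sigma> k)) \<mu>"
    and "\<And>A. monotone_set A \<Longrightarrow> A \<in> sets \<mu> \<Longrightarrow> measure \<mu> A = 0"
  shows "(\<lambda>k. real (LIS (N k) (\<sigma> k)) / real (N k)) \<longlonglongrightarrow> 0"
proof (rule order_tendstoI)
  show "\<forall>\<^sub>F k in sequentially. real (LIS (N k) (\<sigma> k)) / real (N k) < e" if "0 < e" for e
  proof -
    have "\<not> (\<exists>\<^sub>F k in sequentially. e \<le> real (LIS (N k) (\<sigma> k)) / real (N k))"
      using assms that by (rule not_frequently_LIS_ratio_ge)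
    then show ?thesis
      by (simp add: not_frequently not_le)
  qed
  show "\<forall>\<^sub>F k in sequentially. e < real (LIS (N k) (\<sigma> k)) / real (N k)" if "e < 0" for e
    using that by (intro always_eventually allI) (auto intro: less_le_trans)
qed

end
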